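(* Let $\delta\in(0,1)$, let $\mathbf{k}$ be a reproducing kernel, and let $\mathcal{X}_{\mathrm{in}}=(x_i)_{i=1}^{n_{\mathrm{in}}}$ with $n_{\mathrm{out}}\in n_{\mathrm{in}}/2^{\mathbb{N}}$ (i.e. $n_{\mathrm{in}}/n_{\mathrm{out}}=2^m$ for a positive integer $m$). Let $\mathcal{X}_{\mathrm{out}}$ be the output of repeated Kernel Halving $\mathrm{RKH}(\delta)$, which sets $m=\log_2(n_{\mathrm{in}}/n_{\mathrm{out}})$ and applies $\mathrm{KH}(\delta/m)$ with kernel $\mathbf{k}$ $m$ times in succession (each time to the previous output). Then there is an event $\mathcal{E}$ of probability at least $1-\delta/2$ on which $(\mathbb{P}_{\mathrm{in}}-\mathbb{P}_{\mathrm{out}})\mathbf{k}$ is $(\mathbf{k},\nu)$-sub-Gaussian with $$\nu=\frac{2}{n_{\mathrm{out}}\sqrt3}\sqrt{\log\Big(\frac{6n_{\mathrm{out}}\log_2(n_{\mathrm{in}}/n_{\mathrm{out}})}{\delta}\Big)}\ \min\Big(\max_{x\in\mathcal{X}_{\mathrm{in}}}\sqrt{\mathbf{k}(x,x)},\ \max_{x\in\mathcal{X}_{\mathrm{in}}}\mathrm{MMD}_{\mathbf{k}}(\delta_x,\mathbb{P}_{\mathrm{in}})\Big).$$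
   Context: Kernel Halving $\mathrm{KH}(\delta)$: input $(x_1,\dots,x_{m'})$ with $m'$ even and kernel $\mathbf{k}$ with RKHS $\mathcal{H}_{\mathbf{k}}$. Set ordered lists $S_1=S_2=\emptyset$, $\psi_0=0$, $b_{\max,0}=0$. For $i=1,\dots,m'/2$: let $(x,x')=(x_{2i-1},x_{2i})$, $f_i=\mathbf{k}(x_{2i-1},\cdot)-\mathbf{k}(x_{2i},\cdot)$, $b_i=\|f_i\|_{\mathbf{k}}$, $b_{\max,i}=\max(b_i,b_{\max,i-1})$, $a_i=b_ib_{\max,i}(\tfrac12+\log(2m'/\delta))$, $\alpha_i=\langle\psi_{i-1},f_i\rangle_{\mathbf{k}}$. With probability $\min(1,\tfrac12(1-\alpha_i/a_i)_+)$ (fresh randomness) set $\eta_i=1$ and swap $x$ and $x'$; otherwise $\eta_i=-1$. Append $x$ to $S_1$, $x'$ to $S_2$, set $\psi_i=\psi_{i-1}+\eta_if_i$. Output $S_1$ (size $m'/2$). $\mathbb{P}_{\mathrm{in}},\mathbb{P}_{\mathrm{out}}$ are the empirical distributions of $\mathcal{X}_{\mathrm{in}},\mathcal{X}_{\mathrm{out}}$; $(\mathbb{P}_{\mathrm{in}}-\mathbb{P}_{\mathrm{out}})\mathbf{k}:=\frac1{n_{\mathrm{in}}}\sum_{x\in\mathcal{X}_{\mathrm{in}}}\mathbf{k}(x,\cdot)-\frac1{n_{\mathrm{out}}}\sum_{x\in\mathcal{X}_{\mathrm{out}}}\mathbf{k}(x,\cdot)$. $\mathrm{MMD}_{\mathbf{k}}(\mu,\tilde\mu)=\sup_{\|f\|_{\mathbf{k}}\le1}|\mathbb{E}_\mu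 f-\mathbb{E}_{\tilde\mu}f|$. A random $\phi\in\mathcal{H}_{\mathbf{k}}$ is $(\mathbf{k},\nu)$-sub-Gaussian on $\mathcal{E}$ if $\mathbb{E}[\exp(\langle f,\phi\rangle_{\mathbf{k}})\mathbf{1}_{\mathcal{E}}]\le\exp(\frac{\nu^2}{2}\|f\|_{\mathbf{k}}^2)$ for all $f\in\mathcal{H}_{\mathbf{k}}$. *)

theory Defs
  imports "HOL-Probability.Probability"
begin

text \<open>The reproducing kernel is represented through a feature map
  \<Phi> into a real inner product space: k(x,y) = <\<Phi> x, \<Phi> y>.
  The RKHS function associated with a vector f is x \<mapsto> <f, \<Phi> x>.\<close>

definition fkernel :: "('a \<Rightarrow> 'h::real_inner) \<Rightarrow> 'a \<Rightarrow> 'a \<Rightarrow> real" where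
  "fkernel \<Phi> x y = inner (\<Phi> x) (\<Phi> y)"

definition emb :: "('a \<Rightarrow> 'h::real_inner) \<Rightarrow> 'a list \<Rightarrow> 'h" where
  "emb \<Phi> xs = (1 / real (length xs)) *\<^sub>R sum_list (map \<Phi> xs)"

definition emp_avg :: "'a list \<Rightarrow> ('a \<Rightarrow> real) \<Rightarrow> real" where
  "emp_avg xs g = sum_list (map g xs) / real (length xs)"

definition mmd :: "('a \<Rightarrow> 'h::real_inner) \<Rightarrow> 'a list \<Rightarrow> 'a list \<Rightarrow> real" where
  "mmd \<Phi> xs ys = (SUP f\<in>{f::'h. norm f \<le> 1}.
      \<bar>emp_avg xs (\<lambda>x. inner f (\<Phi> x)) - emp_avg ys (\<lambda>x. inner f (\<Phi> x))\<bar>)"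

text \<open>Arguments: feature map, the constant
  c = 1/2 + log(2m'/delta), remaining input points (consumed in pairs),
  current psi, current b_max. Returns the distribution of (S1, list of eta's),
  where eta = True means eta_i = 1 (swap).\<close>
fun kh_loop :: "('a \<Rightarrow> 'h::real_inner) \<Rightarrow> real \<Rightarrow> 'a list \<Rightarrow> 'h \<Rightarrow> real
    \<Rightarrow> ('a list \<times> bool list) pmf" where
  "kh_loop \<Phi> c (x # x' # rest) \<psi> bmax =
     (let f = \<Phi> x - \<Phi> x';
          b = norm f;
          bm = max b bmax;
          a = b * bm * c;
          \<alpha> = inner \<psi> f;
          p = min 1 ((1/2) * max 0 (1 - \<alpha> / a))
      in bind_pmf (bernoulli_pmf p) (\<lambda>\<eta>.
           let s1 = (if \<eta> then x' else x);
               \<psi>' = \<psi> + (if \<eta> then 1 else -1) *\<^sub>R f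
           in map_pmf (\<lambda>(S, es). (s1 # S, \<eta> # es)) (kh_loop \<Phi> c rest \<psi>' bm)))"
| "kh_loop \<Phi> c _ \<psi> bmax = return_pmf ([], [])"

definition kh :: "('a \<Rightarrow> 'h::real_inner) \<Rightarrow> real \<Rightarrow> 'a list \<Rightarrow> ('a list \<times> bool list) pmf" where
  "kh \<Phi> \<delta> xs = kh_loop \<Phi> (1/2 + ln (2 * real (length xs) / \<delta>)) xs 0 0"

fun rkh_iter :: "('a \<Rightarrow> 'h::real_inner) \<Rightarrow> real \<Rightarrow> nat \<Rightarrow> 'a list
    \<Rightarrow> ('a list \<times> bool list list) pmf" where
  "rkh_iter \<Phi> \<delta>' 0 xs = return_pmf (xs, [])"
| "rkh_iter \<Phi> \<delta>' (Suc j) xs =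
     bind_pmf (kh \<Phi> \<delta>' xs) (\<lambda>(S, es).
       map_pmf (\<lambda>(T, ess). (T, es # ess)) (rkh_iter \<Phi> \<delta>' j S))"

definition rkh :: "('a \<Rightarrow> 'h::real_inner) \<Rightarrow> real \<Rightarrow> nat \<Rightarrow> 'a list
    \<Rightarrow> ('a list \<times> bool list list) pmf" where
  "rkh \<Phi> \<delta> m xs = rkh_iter \<Phi> (\<delta> / real m) m xs"

definition sub_gaussian_on :: "'w pmf \<Rightarrow> ('w \<Rightarrow> 'h::real_inner) \<Rightarrow> real \<Rightarrow> 'w set \<Rightarrow> bool" where
  "sub_gaussian_on P \<phi> \<nu> E \<longleftrightarrow>
     (\<forall>f::'h. measure_pmf.expectation P (\<lambda>\<omega>. exp (inner f (\<phi> \<omega>)) * indicator E \<omega>)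
              \<le> exp (\<nu>\<^sup>2 / 2 * (norm f)\<^sup>2))"

end

theory Submission imports Defs begin

text \<open>Within one round of kernel halving, with \<open>c = 1/2 + log (2 m' / \<delta>)\<close>, call a run good if
  no swap probability is clipped, i.e. \<open>\<bar>\<alpha>_i\<bar> \<le> a_i\<close> at every step. Then the increment
  \<open>\<eta>_i f_i\<close> has conditional mean \<open>-(\<alpha>_i / a_i) f_i\<close>, and Hoeffding's two-point bound, applied
  backwards from the last step, shows that on the good event the final \<open>\<psi>\<close> is sub-Gaussian with
  variance proxy \<open>B^2 c^2 / (2c - 1)\<close>, where \<open>B\<close> bounds all distances between feature vectors.
  The same backward induction, applied to the Chernoff majorant \<open>exp (\<plusminus>t \<alpha>_i - t a_i)\<close> of
  each clipping event, bounds the probability of a bad run by \<open>m' exp (-(c - 1/2)) = \<delta> / 2\<close>.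
  Over the rounds of repeated halving the variance proxies and the failure probabilities add up;
  the proxies form a series dominated by the square of the stated \<open>\<nu>\<close>, and \<open>B\<close> is at most
  twice either of the two maxima in the statement.\<close>

section \<open>One step of kernel halving\<close>

lemma two_point_mgf_le:
  fixes u \<mu> :: real
  assumes "\<bar>\<mu>\<bar> \<le> 1"
  shows "(1 + \<mu>) / 2 * exp u + (1 - \<mu>) / 2 * exp (- u) \<le> exp (\<mu> * u + u\<^sup>2 / 2)"
proof -
  have nonneg: "(1 + \<mu>) / 2 * exp u + (1 - \<mu>) / 2 * exp (- u) \<le> exp (\<mu> * u + u\<^sup>2 / 2)"
    if "\<bar>\<mu>\<bar> \<le> 1" "0 \<le> u" for u \<mu> :: real
  proof -
    define q where "q = (1 + \<mu>) / 2"
    have q: "0 \<le> q" using that by (simp add: q_def)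
    have pos: "0 < 1 + q * (exp (2 * u) - 1)"
      using that q by (simp add: add_pos_nonneg)
    have "ln (1 + q * (exp (2 * u) - 1)) \<le> 2 * u * q + u\<^sup>2 / 2"
      using Hoeffdings_lemma_aux[of "2 * u" q] q that by (simp add: power2_eq_square)
    then have "1 + q * (exp (2 * u) - 1) \<le> exp (2 * u * q + u\<^sup>2 / 2)"
      using pos by (metis exp_le_cancel_iff exp_ln)
    then have "exp (- u) * (1 + q * (exp (2 * u) - 1)) \<le> exp (- u) * exp (2 * u * q + u\<^sup>2 / 2)"
      by simp
    moreover have "exp (- u) * (1 + q * (exp (2 * u) - 1))
        = exp (- u) + q * (exp (- u) * exp (2 * u)) - q * exp (- u)"
      by (simp add: algebra_simps)
    then have "exp (- u) * (1 + q * (exp (2 * u) - 1)) = (1 + \<mu>) / 2 * exp u + (1 - \<mu>) / 2 * exp (- u)"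
      by (simp add: q_def field_simps flip: exp_add)
    moreover have "exp (- u) * exp (2 * u * q + u\<^sup>2 / 2) = exp (\<mu> * u + u\<^sup>2 / 2)"
      by (simp add: q_def algebra_simps flip: exp_add)
    ultimately show ?thesis by simp
  qed
  show ?thesis
  proof (cases "0 \<le> u")
    case True
    then show ?thesis using nonneg assms by blast
  next
    case False
    then show ?thesis using nonneg[of "- \<mu>" "- u"] assms by (simp add: algebra_simps)
  qed
qed

lemma kh_step_mgf_le:
  fixes \<psi> f G :: "'h::real_inner"
  assumes "\<bar>inner \<psi> f\<bar> \<le> a" and "0 \<le> a" and "a = 0 \<Longrightarrow> f = 0"
  defines "p \<equiv> min 1 (1/2 * max 0 (1 - inner \<psi> f / a))"
  shows "p * exp (inner G (\<psi> + f) + Q) + (1 - p) * exp (inner G (\<psi> - f) + Q)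
    \<le> exp (inner (G - (inner G f / a) *\<^sub>R f) \<psi> + (Q + (inner G f)\<^sup>2 / 2))"
proof (cases "a = 0")
  case True
  then show ?thesis using assms by (simp add: p_def field_simps)
next
  case False
  with assms have "0 < a" by simp
  \<comment> \<open>Unclipped, the swap probability is \<open>(1 + \<mu>) / 2\<close>: the increment \<open>\<plusminus>f\<close> has mean \<open>\<mu> f\<close>.\<close>
  define \<mu> where "\<mu> = - inner \<psi> f / a"
  define u where "u = inner G f"
  have "- 1 \<le> inner \<psi> f / a" "inner \<psi> f / a \<le> 1"
    using assms(1) \<open>0 < a\<close> by (simp_all add: abs_le_iff le_divide_eq divide_le_eq)
  then have \<mu>: "\<bar>\<mu>\<bar> \<le> 1" and p: "p = (1 + \<mu>) / 2"
    by (auto simp: p_def \<mu>_def)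
  have "exp (inner G (\<psi> + f) + Q) = exp (inner G \<psi> + Q) * exp u"
    "exp (inner G (\<psi> - f) + Q) = exp (inner G \<psi> + Q) * exp (- u)"
    by (simp_all add: u_def inner_add_right inner_diff_right algebra_simps flip: exp_add)
  then have "p * exp (inner G (\<psi> + f) + Q) + (1 - p) * exp (inner G (\<psi> - f) + Q)
      = exp (inner G \<psi> + Q) * ((1 + \<mu>) / 2 * exp u + (1 - \<mu>) / 2 * exp (- u))"
    by (simp add: p field_simps)
  also have "\<dots> \<le> exp (inner G \<psi> + Q) * exp (\<mu> * u + u\<^sup>2 / 2)"
    by (intro mult_left_mono two_point_mgf_le \<mu>) simp
  also have "\<dots> = exp (inner (G - (inner G f / a) *\<^sub>R f) \<psi> + (Q + (inner G f)\<^sup>2 / 2))"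
    by (simp add: \<mu>_def u_def inner_diff_left inner_commute[of f \<psi>] algebra_simps flip: exp_add)
  finally show ?thesis .
qed

definition kh_variance :: "real \<Rightarrow> real \<Rightarrow> real" where
  "kh_variance c B = B\<^sup>2 * c\<^sup>2 / (2 * c - 1)"

lemma kh_variance_nonneg: "1/2 < c \<Longrightarrow> 0 \<le> kh_variance c B"
  by (simp add: kh_variance_def)

lemma kh_variance_mono:
  assumes "1/2 < c" "0 \<le> B" "B \<le> B'"
  shows "kh_variance c B \<le> kh_variance c B'"
  unfolding kh_variance_def using assms by (intro divide_right_mono mult_right_mono power_mono) auto

lemma kh_variance_step:
  fixes f G :: "'h::real_inner"
  assumes "1/2 < c" "0 \<le> bm"
  defines "a \<equiv> norm f * max (norm f) bm * c"
  shows "(inner G f)\<^sup>2 / 2 + kh_variance c bm * (norm (G - (inner G f / a) *\<^sub>R f))\<^sup>2 / 2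
    \<le> kh_variance c (max (norm f) bm) * (norm G)\<^sup>2 / 2"
proof -
  define b where "b = norm f"
  define B where "B = max b bm"
  define t where "t = inner G f / a"
  define s' where "s' = kh_variance c B"
  have "0 \<le> b" "b \<le> B" by (auto simp: b_def B_def)
  \<comment> \<open>The value B^2 c^2 / (2c - 1) of the variance proxy is exactly what makes this hold.\<close>
  have key: "a\<^sup>2 \<le> s' * (2 * a - b\<^sup>2)"
  proof -
    have "s' * (2 * a - b\<^sup>2) - a\<^sup>2 = B\<^sup>2 * c\<^sup>2 * (2 * b * c * (B - b)) / (2 * c - 1)"
      using assms(1) by (simp add: s'_def kh_variance_def a_def b_def[symmetric] B_def[symmetric]
          field_simps power2_eq_square)
    also have "\<dots> \<ge> 0" using assms(1) \<open>0 \<le> b\<close> \<open>b \<le> B\<close> by simp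
    finally show ?thesis by simp
  qed
  have u: "inner G f = t * a"
  proof (cases "f = 0")
    case False
    then have "0 < norm f" by simp
    then have "0 < max (norm f) bm" by (simp add: less_max_iff_disj)
    with \<open>0 < norm f\<close> have "0 < a" using assms(1) by (simp add: a_def)
    then show ?thesis by (simp add: t_def)
  qed (simp add: a_def)
  have nG: "(norm (G - t *\<^sub>R f))\<^sup>2 = (norm G)\<^sup>2 - 2 * t * inner G f + t\<^sup>2 * b\<^sup>2"
    unfolding b_def power2_norm_eq_inner
    by (simp add: inner_diff_left inner_diff_right inner_commute[of f G] algebra_simps power2_eq_square)
  have "kh_variance c bm \<le> s'"
    unfolding s'_def B_def b_def by (rule kh_variance_mono) (use assms in auto)
  then have "kh_variance c bm * (norm (G - t *\<^sub>R f))\<^sup>2 \<le> s' * (norm (G - t *\<^sub>R f))\<^sup>2"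
    by (simp add: mult_right_mono)
  moreover have "(inner G f)\<^sup>2 + s' * (norm (G - t *\<^sub>R f))\<^sup>2
      = s' * (norm G)\<^sup>2 + t\<^sup>2 * (a\<^sup>2 - s' * (2 * a - b\<^sup>2))"
    unfolding nG u by (simp add: algebra_simps power2_eq_square)
  moreover have "t\<^sup>2 * (a\<^sup>2 - s' * (2 * a - b\<^sup>2)) \<le> 0"
    using key by (simp add: mult_nonneg_nonpos)
  ultimately show ?thesis by (simp add: t_def s'_def B_def b_def)
qed

section \<open>One round of kernel halving\<close>

lemma ennreal_convex_comb_le:
  fixes A B p :: real and VT VF :: ennreal
  assumes "VT \<le> ennreal A" "VF \<le> ennreal B" "0 \<le> p" "p \<le> 1" "0 \<le> A" "0 \<le> B"
  shows "VT * ennreal p + VF * ennreal (1 - p) \<le> ennreal (p * A + (1 - p) * B)"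
proof -
  have "VT * ennreal p + VF * ennreal (1 - p) \<le> ennreal A * ennreal p + ennreal B * ennreal (1 - p)"
    using assms by (intro add_mono mult_right_mono) auto
  also have "\<dots> = ennreal (p * A) + ennreal ((1 - p) * B)"
    using assms by (simp add: ennreal_mult mult.commute)
  also have "\<dots> = ennreal (p * A + (1 - p) * B)"
    using assms by (simp add: ennreal_plus)
  finally show ?thesis .
qed

fun kh_good :: "('a \<Rightarrow> 'h::real_inner) \<Rightarrow> real \<Rightarrow> 'a list \<Rightarrow> 'h \<Rightarrow> real \<Rightarrow> bool list \<Rightarrow> bool" where
  "kh_good \<Phi> c (x # x' # rest) \<psi> bmax (\<eta> # es) =
     (let f = \<Phi> x - \<Phi> x'; bm = max (norm f) bmax
      in \<bar>inner \<psi> f\<bar> \<le> norm f * bm * c \<and> kh_good \<Phi> c rest (\<psi> + (if \<eta> then 1 else -1) *\<^sub>R f) bm es)"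
| "kh_good \<Phi> c _ \<psi> bmax _ = True"

fun kh_select :: "'a list \<Rightarrow> bool list \<Rightarrow> 'a list" where
  "kh_select (x # x' # rest) (\<eta> # es) = (if \<eta> then x' else x) # kh_select rest es"
| "kh_select _ _ = []"

lemma kh_loop_support:
  assumes "(S, es) \<in> set_pmf (kh_loop \<Phi> c xs \<psi> bm)"
  shows "S = kh_select xs es \<and> length S = length xs div 2 \<and> set S \<subseteq> set xs"
  using assms
proof (induction \<Phi> c xs \<psi> bm arbitrary: S es rule: kh_loop.induct)
  case (1 \<Phi> c x x' rest \<psi> bmax)
  from "1.prems" obtain \<eta> S' es' where
    \<eta>: "\<eta> \<in> set_pmf (bernoulli_pmf (min 1 ((1/2) * max 0 (1 - inner \<psi> (\<Phi> x - \<Phi> x') /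
          (norm (\<Phi> x - \<Phi> x') * max (norm (\<Phi> x - \<Phi> x')) bmax * c)))))"
    and S': "(S', es') \<in> set_pmf (kh_loop \<Phi> c rest (\<psi> + (if \<eta> then 1 else -1) *\<^sub>R (\<Phi> x - \<Phi> x'))
            (max (norm (\<Phi> x - \<Phi> x')) bmax))"
    and "S = (if \<eta> then x' else x) # S'" "es = \<eta> # es'"
    by (auto simp: Let_def)
  with "1.IH"[OF refl refl refl refl refl refl \<eta> refl refl S'] show ?case by auto
qed auto

definition halving_discrepancy :: "('a \<Rightarrow> 'h::real_vector) \<Rightarrow> 'a list \<Rightarrow> 'a list \<Rightarrow> 'h" where
  "halving_discrepancy \<Phi> xs S = sum_list (map \<Phi> xs) - 2 *\<^sub>R sum_list (map \<Phi> S)"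

lemma halving_discrepancy_Cons:
  "halving_discrepancy \<Phi> (x # x' # rest) (x' # S) = (\<Phi> x - \<Phi> x') + halving_discrepancy \<Phi> rest S"
  "halving_discrepancy \<Phi> (x # x' # rest) (x # S) = halving_discrepancy \<Phi> rest S - (\<Phi> x - \<Phi> x')"
  by (simp_all add: halving_discrepancy_def algebra_simps scaleR_2)

lemma emb_diff_eq_halving_discrepancy:
  assumes "length xs = 2 * L" "length S = L"
  shows "emb \<Phi> xs - emb \<Phi> S = (1 / (2 * real L)) *\<^sub>R halving_discrepancy \<Phi> xs S"
  using assms by (simp add: emb_def halving_discrepancy_def scaleR_diff_right)

text \<open>Started in state \<open>(\<psi>, bm)\<close> and producing \<open>S\<close>, the loop ends with
  \<open>\<psi> + halving_discrepancy \<Phi> xs S\<close> as its final \<open>\<psi>\<close>.\<close>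

definition kh_integral :: "('a \<Rightarrow> 'h::real_inner) \<Rightarrow> real \<Rightarrow> 'a list \<Rightarrow> 'h \<Rightarrow> real
    \<Rightarrow> ('h \<Rightarrow> ennreal) \<Rightarrow> ennreal \<Rightarrow> ennreal" where
  "kh_integral \<Phi> c xs \<psi> bm h d = (\<integral>\<^sup>+\<omega>. (if kh_good \<Phi> c xs \<psi> bm (snd \<omega>)
      then h (\<psi> + halving_discrepancy \<Phi> xs (fst \<omega>)) else d) \<partial>kh_loop \<Phi> c xs \<psi> bm)"

lemma kh_integral_Nil: "kh_integral \<Phi> c [] \<psi> bm h d = h \<psi>"
  by (simp add: kh_integral_def halving_discrepancy_def)

lemma kh_integral_Cons:
  fixes \<Phi> :: "'a \<Rightarrow> 'h::real_inner" and x x' :: 'a and \<psi> :: 'h and bm c :: real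
  defines "f \<equiv> \<Phi> x - \<Phi> x'"
  defines "a \<equiv> norm f * max (norm f) bm * c"
  defines "p \<equiv> min 1 (1/2 * max 0 (1 - inner \<psi> f / a))"
  shows "kh_integral \<Phi> c (x # x' # rest) \<psi> bm h d =
    (if \<bar>inner \<psi> f\<bar> \<le> a then
       kh_integral \<Phi> c rest (\<psi> + f) (max (norm f) bm) h d * ennreal p
     + kh_integral \<Phi> c rest (\<psi> - f) (max (norm f) bm) h d * ennreal (1 - p)
     else d)"
proof -
  have p: "0 \<le> p" "p \<le> 1" by (auto simp: p_def)
  define V where "V \<eta> = (\<integral>\<^sup>+\<omega>. (if kh_good \<Phi> c (x # x' # rest) \<psi> bm (snd \<omega>)
       then h (\<psi> + halving_discrepancy \<Phi> (x # x' # rest) (fst \<omega>)) else d)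
     \<partial>map_pmf (\<lambda>(S, es). ((if \<eta> then x' else x) # S, \<eta> # es))
         (kh_loop \<Phi> c rest (\<psi> + (if \<eta> then 1 else -1) *\<^sub>R f) (max (norm f) bm)))" for \<eta>
  have split: "kh_integral \<Phi> c (x # x' # rest) \<psi> bm h d = V True * ennreal p + V False * ennreal (1 - p)"
    unfolding kh_integral_def V_def kh_loop.simps Let_def f_def[symmetric] a_def[symmetric] p_def[symmetric]
    by (subst nn_integral_bind_pmf, subst nn_integral_bernoulli_pmf) (use p in simp_all)
  have V: "V \<eta> = (if \<bar>inner \<psi> f\<bar> \<le> a then
      kh_integral \<Phi> c rest (\<psi> + (if \<eta> then 1 else -1) *\<^sub>R f) (max (norm f) bm) h d else d)" for \<eta>
  proof (cases "\<bar>inner \<psi> f\<bar> \<le> a")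
    case True
    then show ?thesis
      unfolding V_def kh_integral_def nn_integral_map_pmf
      by (cases \<eta>) (auto intro!: nn_integral_cong
          simp: halving_discrepancy_Cons split_beta Let_def f_def[symmetric] a_def algebra_simps)
  next
    case False
    then show ?thesis
      unfolding V_def nn_integral_map_pmf by (simp add: split_beta Let_def f_def[symmetric] a_def)
  qed
  show ?thesis
  proof (cases "\<bar>inner \<psi> f\<bar> \<le> a")
    case True
    then show ?thesis by (simp add: split V)
  next
    case False
    then have "kh_integral \<Phi> c (x # x' # rest) \<psi> bm h d = d * (ennreal p + ennreal (1 - p))"
      by (simp add: split V distrib_left)
    also have "\<dots> = d" using p by (simp flip: ennreal_plus)
    finally show ?thesis using False by simp
  qed
qed

text \<open>The integrals of \<open>kh_loop\<close> are bounded by sums of exponentials of affine functions of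
  \<open>\<psi>\<close>. If \<open>\<psi>\<close> were sub-Gaussian with variance proxy \<open>\<sigma>2\<close>, \<open>exp_affine_bound \<sigma>2 ps\<close> would bound the expectation of
  \<open>exp_affine ps \<psi>\<close>; each step of the backward induction moves one sign of the loop into the
  majorant without increasing this quantity.\<close>

definition exp_affine :: "('h::real_inner \<times> real) list \<Rightarrow> 'h \<Rightarrow> real" where
  "exp_affine ps \<psi> = (\<Sum>(G, Q)\<leftarrow>ps. exp (inner G \<psi> + Q))"

definition exp_affine_bound :: "real \<Rightarrow> ('h::real_inner \<times> real) list \<Rightarrow> real" where
  "exp_affine_bound \<sigma>2 ps = (\<Sum>(G, Q)\<leftarrow>ps. exp (Q + \<sigma>2 * (norm G)\<^sup>2 / 2))"

definition kh_update :: "'h::real_inner \<Rightarrow> real \<Rightarrow> 'h \<times> real \<Rightarrow> 'h \<times> real" where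
  "kh_update f a = (\<lambda>(G, Q). (G - (inner G f / a) *\<^sub>R f, Q + (inner G f)\<^sup>2 / 2))"

lemma exp_affine_nonneg: "0 \<le> exp_affine ps \<psi>"
  unfolding exp_affine_def by (intro sum_list_nonneg) auto

lemma exp_affine_append: "exp_affine (ps @ qs) \<psi> = exp_affine ps \<psi> + exp_affine qs \<psi>"
  by (simp add: exp_affine_def)

lemma exp_affine_bound_append:
  "exp_affine_bound \<sigma>2 (ps @ qs) = exp_affine_bound \<sigma>2 ps + exp_affine_bound \<sigma>2 qs"
  by (simp add: exp_affine_bound_def)

lemma exp_affine_zero_le_bound:
  assumes "0 \<le> \<sigma>2"
  shows "exp_affine ps 0 \<le> exp_affine_bound \<sigma>2 ps"
  unfolding exp_affine_def exp_affine_bound_def using assms by (intro sum_list_mono) (auto simp: split_beta)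

lemma exp_affine_bound_update_le:
  fixes f :: "'h::real_inner"
  assumes "1/2 < c" "0 \<le> bm"
  shows "exp_affine_bound (kh_variance c bm) (map (kh_update f (norm f * max (norm f) bm * c)) ps)
    \<le> exp_affine_bound (kh_variance c (max (norm f) bm)) ps"
  unfolding exp_affine_bound_def map_map
proof (intro sum_list_mono)
  fix q :: "'h \<times> real"
  obtain G Q where q: "q = (G, Q)" by (cases q)
  show "((\<lambda>(G, Q). exp (Q + kh_variance c bm * (norm G)\<^sup>2 / 2))
          \<circ> kh_update f (norm f * max (norm f) bm * c)) q
      \<le> (\<lambda>(G, Q). exp (Q + kh_variance c (max (norm f) bm) * (norm G)\<^sup>2 / 2)) q"
    using kh_variance_step[OF assms, of G f] by (simp add: q kh_update_def)
qed

lemma exp_affine_update_le: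
  fixes \<psi> f :: "'h::real_inner"
  assumes "\<bar>inner \<psi> f\<bar> \<le> a" and "0 \<le> a" and "a = 0 \<Longrightarrow> f = 0"
  defines "p \<equiv> min 1 (1/2 * max 0 (1 - inner \<psi> f / a))"
  shows "p * exp_affine ps (\<psi> + f) + (1 - p) * exp_affine ps (\<psi> - f)
    \<le> exp_affine (map (kh_update f a) ps) \<psi>"
proof (induction ps)
  case Nil
  then show ?case by (simp add: exp_affine_def)
next
  case (Cons q ps)
  obtain G Q where q: "q = (G, Q)" by (cases q)
  have "p * exp_affine (q # ps) (\<psi> + f) + (1 - p) * exp_affine (q # ps) (\<psi> - f)
      = (p * exp (inner G (\<psi> + f) + Q) + (1 - p) * exp (inner G (\<psi> - f) + Q))
        + (p * exp_affine ps (\<psi> + f) + (1 - p) * exp_affine ps (\<psi> - f))"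
    by (simp add: exp_affine_def q algebra_simps)
  also have "\<dots> \<le> exp_affine [kh_update f a (G, Q)] \<psi> + exp_affine (map (kh_update f a) ps) \<psi>"
    using kh_step_mgf_le[OF assms(1-3), of G Q] Cons.IH
    by (intro add_mono) (simp_all add: exp_affine_def kh_update_def p_def)
  finally show ?case by (simp add: q exp_affine_def)
qed

lemma kh_integral_Cons_le:
  fixes \<Phi> :: "'a \<Rightarrow> 'h::real_inner" and x x' :: 'a and bm c :: real
  defines "f \<equiv> \<Phi> x - \<Phi> x'"
  defines "a \<equiv> norm f * max (norm f) bm * c"
  assumes "0 < c" "0 \<le> bm"
    and majorant: "\<And>\<psi>. kh_integral \<Phi> c rest \<psi> (max (norm f) bm) h d \<le> ennreal (exp_affine ps \<psi>)"
  shows "kh_integral \<Phi> c (x # x' # rest) \<psi> bm h d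
    \<le> (if \<bar>inner \<psi> f\<bar> \<le> a then ennreal (exp_affine (map (kh_update f a) ps) \<psi>) else d)"
proof (cases "\<bar>inner \<psi> f\<bar> \<le> a")
  case False
  then show ?thesis by (simp add: kh_integral_Cons f_def a_def)
next
  case True
  define p where "p = min 1 (1/2 * max 0 (1 - inner \<psi> f / a))"
  have "0 \<le> a" using assms by (simp add: a_def)
  have f0: "f = 0" if "a = 0"
  proof (rule ccontr)
    assume "f \<noteq> 0"
    then have "0 < norm f" by simp
    then have "0 < max (norm f) bm" by (simp add: less_max_iff_disj)
    with \<open>0 < norm f\<close> \<open>0 < c\<close> that show False by (simp add: a_def)
  qed
  have "kh_integral \<Phi> c (x # x' # rest) \<psi> bm h d
      = kh_integral \<Phi> c rest (\<psi> + f) (max (norm f) bm) h d * ennreal p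
      + kh_integral \<Phi> c rest (\<psi> - f) (max (norm f) bm) h d * ennreal (1 - p)"
    using True by (simp add: kh_integral_Cons f_def a_def p_def)
  also have "\<dots> \<le> ennreal (p * exp_affine ps (\<psi> + f) + (1 - p) * exp_affine ps (\<psi> - f))"
    by (intro ennreal_convex_comb_le majorant exp_affine_nonneg) (auto simp: p_def)
  also have "\<dots> \<le> ennreal (exp_affine (map (kh_update f a) ps) \<psi>)"
    unfolding p_def by (intro ennreal_leI exp_affine_update_le True \<open>0 \<le> a\<close> f0)
  finally show ?thesis using True by simp
qed

lemma kh_integral_exp_majorant:
  fixes \<Phi> :: "'a \<Rightarrow> 'h::real_inner" and g :: 'h
  assumes "even (length xs)" "1/2 < c" "0 \<le> bm" "bm \<le> B"
    and "\<forall>x\<in>set xs. \<forall>y\<in>set xs. norm (\<Phi> x - \<Phi> y) \<le> B"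
  shows "\<exists>ps. (\<forall>\<psi>. kh_integral \<Phi> c xs \<psi> bm (\<lambda>v. ennreal (exp (inner g v))) 0 \<le> ennreal (exp_affine ps \<psi>))
    \<and> exp_affine_bound (kh_variance c bm) ps \<le> exp (kh_variance c B * (norm g)\<^sup>2 / 2)"
  using assms
proof (induction xs arbitrary: bm rule: induct_list012)
  case 1
  have "kh_variance c bm * (norm g)\<^sup>2 \<le> kh_variance c B * (norm g)\<^sup>2"
    using kh_variance_mono[of c bm B] 1 by (simp add: mult_right_mono)
  then show ?case
    by (intro exI[of _ "[(g, 0)]"]) (simp add: kh_integral_Nil exp_affine_def exp_affine_bound_def)
next
  case (2 x)
  then show ?case by simp
next
  case (3 x x' rest)
  define f where "f = \<Phi> x - \<Phi> x'"
  define bm' where "bm' = max (norm f) bm"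
  define a where "a = norm f * bm' * c"
  have "0 \<le> bm'" "bm' \<le> B" using "3.prems" by (auto simp: bm'_def f_def)
  then obtain ps where
    majorant: "\<And>\<psi>. kh_integral \<Phi> c rest \<psi> bm' (\<lambda>v. ennreal (exp (inner g v))) 0 \<le> ennreal (exp_affine ps \<psi>)"
    and bound: "exp_affine_bound (kh_variance c bm') ps \<le> exp (kh_variance c B * (norm g)\<^sup>2 / 2)"
    using "3.IH"(1)[of bm'] "3.prems" by auto
  show ?case
  proof (intro exI[of _ "map (kh_update f a) ps"] conjI allI)
    fix \<psi>
    have "kh_integral \<Phi> c (x # x' # rest) \<psi> bm (\<lambda>v. ennreal (exp (inner g v))) 0
        \<le> (if \<bar>inner \<psi> f\<bar> \<le> a then ennreal (exp_affine (map (kh_update f a) ps) \<psi>) else 0)"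
      unfolding f_def a_def bm'_def
      by (rule kh_integral_Cons_le) (use "3.prems" majorant[unfolded bm'_def f_def] in auto)
    then show "kh_integral \<Phi> c (x # x' # rest) \<psi> bm (\<lambda>v. ennreal (exp (inner g v))) 0
        \<le> ennreal (exp_affine (map (kh_update f a) ps) \<psi>)"
      by (simp split: if_splits)
  next
    show "exp_affine_bound (kh_variance c bm) (map (kh_update f a) ps)
        \<le> exp (kh_variance c B * (norm g)\<^sup>2 / 2)"
      using exp_affine_bound_update_le[of c bm f ps] "3.prems" bound by (simp add: a_def bm'_def)
  qed
qed

lemma kh_bad_exponent_le:
  fixes f :: "'h::real_inner"
  assumes "1/2 < c" "0 \<le> bm" "f \<noteq> 0"
  defines "B \<equiv> max (norm f) bm"
  defines "a \<equiv> norm f * B * c"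
  defines "t \<equiv> a / (kh_variance c B * (norm f)\<^sup>2)"
  shows "0 \<le> t" and "- t * a + kh_variance c bm * (t * norm f)\<^sup>2 / 2 \<le> - (c - 1/2)"
proof -
  have "0 < norm f" "norm f \<le> B" "0 < c" using assms by (auto simp: B_def)
  then have "0 < B" by linarith
  with \<open>0 < norm f\<close> \<open>0 < c\<close> have "0 < a" by (simp add: a_def)
  have "0 < kh_variance c B" using \<open>0 < B\<close> assms(1) by (simp add: kh_variance_def)
  with \<open>0 < a\<close> show "0 \<le> t" by (simp add: t_def)
  have ta: "t * a = 2 * c - 1"
    using \<open>0 < norm f\<close> \<open>0 < B\<close> \<open>0 < c\<close> assms(1)
    by (simp add: t_def a_def kh_variance_def field_simps power2_eq_square)
  have "kh_variance c bm \<le> kh_variance c B"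
    unfolding B_def by (rule kh_variance_mono) (use assms in auto)
  then have "kh_variance c bm * (t * norm f)\<^sup>2 \<le> kh_variance c B * (t * norm f)\<^sup>2"
    by (simp add: mult_right_mono)
  also have "kh_variance c B * (t * norm f)\<^sup>2 = t * a"
    using \<open>0 < norm f\<close> \<open>0 < kh_variance c B\<close>
    by (simp add: t_def power2_eq_square field_simps)
  finally show "- t * a + kh_variance c bm * (t * norm f)\<^sup>2 / 2 \<le> - (c - 1/2)"
    using ta by simp
qed

lemma one_le_exp_add_exp:
  fixes t x a :: real
  assumes "0 \<le> t" "a < \<bar>x\<bar>"
  shows "1 \<le> exp (t * x - t * a) + exp (- t * x - t * a)"
proof -
  have "0 \<le> t * x - t * a \<or> 0 \<le> - t * x - t * a"
  proof (cases "0 \<le> x")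
    case True
    with assms have "0 \<le> t * (x - a)" by (intro mult_nonneg_nonneg) auto
    then show ?thesis by (simp add: algebra_simps)
  next
    case False
    with assms have "0 \<le> t * (- x - a)" by (intro mult_nonneg_nonneg) auto
    then show ?thesis by (simp add: algebra_simps)
  qed
  then show ?thesis
  proof
    assume "0 \<le> t * x - t * a"
    then show ?thesis using exp_ge_zero[of "- t * x - t * a"] by (simp add: add_increasing2)
  next
    assume "0 \<le> - t * x - t * a"
    then show ?thesis using exp_ge_zero[of "t * x - t * a"] by (simp add: add_increasing)
  qed
qed

lemma kh_clipping_majorant:
  fixes f :: "'h::real_inner"
  assumes "1/2 < c" "0 \<le> bm" "f \<noteq> 0"
  defines "a \<equiv> norm f * max (norm f) bm * c"
  obtains qs where "\<And>\<psi>. a < \<bar>inner \<psi> f\<bar> \<Longrightarrow> 1 \<le> exp_affine qs \<psi>"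
    and "exp_affine_bound (kh_variance c bm) qs \<le> 2 * exp (- (c - 1/2))"
proof -
  \<comment> \<open>A Chernoff bound: the indicator of \<open>a < \<bar>inner \<psi> f\<bar>\<close> is at most
    \<open>exp (t * inner \<psi> f - t * a) + exp (- t * inner \<psi> f - t * a)\<close>.\<close>
  define t where "t = a / (kh_variance c (max (norm f) bm) * (norm f)\<^sup>2)"
  have "0 \<le> t" and tail: "- t * a + kh_variance c bm * (t * norm f)\<^sup>2 / 2 \<le> - (c - 1/2)"
    using kh_bad_exponent_le[OF assms(1-3)] by (simp_all add: t_def a_def)
  define qs where "qs = [(t *\<^sub>R f, - t * a), (- t *\<^sub>R f, - t * a)]"
  have qs: "exp_affine qs \<psi> = exp (t * inner \<psi> f - t * a) + exp (- t * inner \<psi> f - t * a)" for \<psi>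
    by (simp add: qs_def exp_affine_def inner_commute)
  have "1 \<le> exp_affine qs \<psi>" if "a < \<bar>inner \<psi> f\<bar>" for \<psi>
    unfolding qs using \<open>0 \<le> t\<close> that by (rule one_le_exp_add_exp)
  moreover have "exp (- t * a + kh_variance c bm * (norm (t *\<^sub>R f))\<^sup>2 / 2) \<le> exp (- (c - 1/2))"
    "exp (- t * a + kh_variance c bm * (norm (- t *\<^sub>R f))\<^sup>2 / 2) \<le> exp (- (c - 1/2))"
    using tail \<open>0 \<le> t\<close> by simp_all
  then have "exp_affine_bound (kh_variance c bm) qs \<le> 2 * exp (- (c - 1/2))"
    by (simp add: qs_def exp_affine_bound_def)
  ultimately show ?thesis by (rule that)
qed

lemma kh_integral_bad_majorant:
  fixes \<Phi> :: "'a \<Rightarrow> 'h::real_inner"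
  assumes "even (length xs)" "1/2 < c" "0 \<le> bm"
  shows "\<exists>ps. (\<forall>\<psi>. kh_integral \<Phi> c xs \<psi> bm (\<lambda>_. 0) 1 \<le> ennreal (exp_affine ps \<psi>))
    \<and> exp_affine_bound (kh_variance c bm) ps \<le> real (length xs) * exp (- (c - 1/2))"
  using assms
proof (induction xs arbitrary: bm rule: induct_list012)
  case 1
  show ?case
    by (intro exI[of _ "[]"]) (simp add: kh_integral_Nil exp_affine_def exp_affine_bound_def)
next
  case (2 x)
  then show ?case by simp
next
  case (3 x x' rest)
  define f where "f = \<Phi> x - \<Phi> x'"
  define bm' where "bm' = max (norm f) bm"
  define a where "a = norm f * bm' * c"
  define e where "e = exp (- (c - 1/2))"
  have "0 \<le> bm'" using "3.prems" by (simp add: bm'_def)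
  then obtain ps where
    majorant: "\<And>\<psi>. kh_integral \<Phi> c rest \<psi> bm' (\<lambda>_. 0) 1 \<le> ennreal (exp_affine ps \<psi>)"
    and bound: "exp_affine_bound (kh_variance c bm') ps \<le> real (length rest) * e"
    using "3.IH"(1)[of bm'] "3.prems" unfolding e_def by auto
  define ps' where "ps' = map (kh_update f a) ps"
  have step: "kh_integral \<Phi> c (x # x' # rest) \<psi> bm (\<lambda>_. 0) 1
      \<le> (if \<bar>inner \<psi> f\<bar> \<le> a then ennreal (exp_affine ps' \<psi>) else 1)" for \<psi>
    unfolding ps'_def f_def a_def bm'_def
    by (rule kh_integral_Cons_le) (use "3.prems" majorant[unfolded bm'_def f_def] in auto)
  have bound': "exp_affine_bound (kh_variance c bm) ps' \<le> real (length rest) * e"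
    using exp_affine_bound_update_le[of c bm f ps] "3.prems" bound
    by (simp add: ps'_def a_def bm'_def)
  have len: "real (length (x # x' # rest)) * e = real (length rest) * e + e + e"
    by (simp add: algebra_simps)
  show ?case
  proof (cases "f = 0")
    case True
    then have "\<bar>inner \<psi> f\<bar> \<le> a" for \<psi> by (simp add: a_def)
    then have "kh_integral \<Phi> c (x # x' # rest) \<psi> bm (\<lambda>_. 0) 1 \<le> ennreal (exp_affine ps' \<psi>)" for \<psi>
      using step[of \<psi>] by simp
    moreover have "0 \<le> e" by (simp add: e_def)
    then have "exp_affine_bound (kh_variance c bm) ps' \<le> real (length (x # x' # rest)) * e"
      using bound' unfolding len by linarith
    ultimately show ?thesis unfolding e_def[symmetric] by blast
  next
    case False
    obtain qs where clip: "\<And>\<psi>. a < \<bar>inner \<psi> f\<bar> \<Longrightarrow> 1 \<le> exp_affine qs \<psi>"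
      and "exp_affine_bound (kh_variance c bm) qs \<le> 2 * e"
      using kh_clipping_majorant[OF "3.prems"(2,3) False] unfolding a_def bm'_def e_def by blast
    then have "exp_affine_bound (kh_variance c bm) (ps' @ qs) \<le> real (length (x # x' # rest)) * e"
      using bound' unfolding len exp_affine_bound_append by linarith
    moreover have "kh_integral \<Phi> c (x # x' # rest) \<psi> bm (\<lambda>_. 0) 1 \<le> ennreal (exp_affine (ps' @ qs) \<psi>)" for \<psi>
    proof -
      have "(if \<bar>inner \<psi> f\<bar> \<le> a then ennreal (exp_affine ps' \<psi>) else 1) \<le> ennreal (exp_affine (ps' @ qs) \<psi>)"
        using exp_affine_nonneg[of ps' \<psi>] exp_affine_nonneg[of qs \<psi>] clip[of \<psi>]
        by (auto simp: exp_affine_append simp del: ennreal_plus)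
      with step[of \<psi>] show ?thesis by (rule order_trans)
    qed
    ultimately show ?thesis unfolding e_def[symmetric] by blast
  qed
qed

definition kh_scale :: "real \<Rightarrow> nat \<Rightarrow> real" where
  "kh_scale \<delta> n = 1/2 + ln (2 * real n / \<delta>)"

lemma kh_eq_kh_loop: "kh \<Phi> \<delta> xs = kh_loop \<Phi> (kh_scale \<delta> (length xs)) xs 0 0"
  by (simp add: kh_def kh_scale_def)

lemma kh_scale_gt:
  assumes "0 < n" "0 < \<delta>" "\<delta> \<le> 1"
  shows "1/2 < kh_scale \<delta> n"
proof -
  have "1 < 2 * real n / \<delta>" using assms by (simp add: field_simps)
  then show ?thesis by (simp add: kh_scale_def)
qed

lemma exp_kh_scale:
  assumes "0 < n" "0 < \<delta>"
  shows "exp (- (kh_scale \<delta> n - 1/2)) = \<delta> / (2 * real n)"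
  using assms by (simp add: kh_scale_def exp_minus)

lemma kh_support:
  assumes "\<omega> \<in> set_pmf (kh \<Phi> \<delta> xs)"
  shows "fst \<omega> = kh_select xs (snd \<omega>)" "length (fst \<omega>) = length xs div 2" "set (fst \<omega>) \<subseteq> set xs"
proof -
  from assms have "(fst \<omega>, snd \<omega>) \<in> set_pmf (kh_loop \<Phi> (kh_scale \<delta> (length xs)) xs 0 0)"
    by (simp add: kh_eq_kh_loop)
  from kh_loop_support[OF this]
  show "fst \<omega> = kh_select xs (snd \<omega>)" "length (fst \<omega>) = length xs div 2" "set (fst \<omega>) \<subseteq> set xs"
    by auto
qed

definition kh_good_run :: "('a \<Rightarrow> 'h::real_inner) \<Rightarrow> real \<Rightarrow> 'a list \<Rightarrow> bool list \<Rightarrow> bool" where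
  "kh_good_run \<Phi> \<delta> xs es = kh_good \<Phi> (kh_scale \<delta> (length xs)) xs 0 0 es"

lemma kh_good_run_mgf_le:
  fixes \<Phi> :: "'a \<Rightarrow> 'h::real_inner" and g :: 'h
  assumes "length xs = 2 * L" "0 < L" "0 < \<delta>" "\<delta> \<le> 1"
    and "\<forall>x\<in>set xs. \<forall>y\<in>set xs. norm (\<Phi> x - \<Phi> y) \<le> B"
  shows "(\<integral>\<^sup>+\<omega>. (if kh_good_run \<Phi> \<delta> xs (snd \<omega>)
      then ennreal (exp (inner g (emb \<Phi> xs - emb \<Phi> (fst \<omega>)))) else 0) \<partial>kh \<Phi> \<delta> xs)
    \<le> ennreal (exp (kh_variance (kh_scale \<delta> (length xs)) B / (4 * (real L)\<^sup>2) * (norm g)\<^sup>2 / 2))"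
proof -
  define c where "c = kh_scale \<delta> (length xs)"
  have c: "1/2 < c" unfolding c_def by (rule kh_scale_gt) (use assms in auto)
  obtain z where "z \<in> set xs" using assms(1,2) by (cases xs) auto
  with assms(5) have "norm (\<Phi> z - \<Phi> z) \<le> B" by blast
  then have "0 \<le> B" by simp
  define g' where "g' = (1 / (2 * real L)) *\<^sub>R g"
  obtain ps where
    majorant: "\<And>\<psi>. kh_integral \<Phi> c xs \<psi> 0 (\<lambda>v. ennreal (exp (inner g' v))) 0 \<le> ennreal (exp_affine ps \<psi>)"
    and bound: "exp_affine_bound (kh_variance c 0) ps \<le> exp (kh_variance c B * (norm g')\<^sup>2 / 2)"
    using kh_integral_exp_majorant[of xs c 0 B \<Phi> g'] assms c \<open>0 \<le> B\<close> by auto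
  have "(\<integral>\<^sup>+\<omega>. (if kh_good_run \<Phi> \<delta> xs (snd \<omega>)
      then ennreal (exp (inner g (emb \<Phi> xs - emb \<Phi> (fst \<omega>)))) else 0) \<partial>kh \<Phi> \<delta> xs)
      = kh_integral \<Phi> c xs 0 0 (\<lambda>v. ennreal (exp (inner g' v))) 0"
    unfolding kh_integral_def kh_eq_kh_loop kh_good_run_def c_def[symmetric]
  proof (intro nn_integral_cong_AE AE_pmfI)
    fix \<omega> assume "\<omega> \<in> set_pmf (kh_loop \<Phi> c xs 0 0)"
    then have "(fst \<omega>, snd \<omega>) \<in> set_pmf (kh_loop \<Phi> c xs 0 0)" by simp
    from kh_loop_support[OF this] assms(1) have "length (fst \<omega>) = L" by auto
    from emb_diff_eq_halving_discrepancy[OF assms(1) this, of \<Phi>]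
    have emb: "emb \<Phi> xs - emb \<Phi> (fst \<omega>) = (1 / (2 * real L)) *\<^sub>R halving_discrepancy \<Phi> xs (fst \<omega>)" .
    show "(if kh_good \<Phi> c xs 0 0 (snd \<omega>) then ennreal (exp (inner g (emb \<Phi> xs - emb \<Phi> (fst \<omega>)))) else 0)
      = (if kh_good \<Phi> c xs 0 0 (snd \<omega>)
         then ennreal (exp (inner g' (0 + halving_discrepancy \<Phi> xs (fst \<omega>)))) else 0)"
      unfolding emb g'_def by simp
  qed
  also have "\<dots> \<le> ennreal (exp_affine ps 0)" by (rule majorant)
  also have "\<dots> \<le> ennreal (exp (kh_variance c B * (norm g')\<^sup>2 / 2))"
    using exp_affine_zero_le_bound[OF kh_variance_nonneg[OF c]] bound by (intro ennreal_leI) (rule order_trans)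
  also have "kh_variance c B * (norm g')\<^sup>2 / 2 = kh_variance c B / (4 * (real L)\<^sup>2) * (norm g)\<^sup>2 / 2"
    using assms(2) by (simp add: g'_def power_divide power_mult_distrib field_simps)
  finally show ?thesis unfolding c_def .
qed

lemma kh_bad_run_le:
  fixes \<Phi> :: "'a \<Rightarrow> 'h::real_inner"
  assumes "even (length xs)" "0 < length xs" "0 < \<delta>" "\<delta> \<le> 1"
  shows "(\<integral>\<^sup>+\<omega>. (if kh_good_run \<Phi> \<delta> xs (snd \<omega>) then 0 else 1) \<partial>kh \<Phi> \<delta> xs) \<le> ennreal (\<delta> / 2)"
proof -
  define c where "c = kh_scale \<delta> (length xs)"
  have c: "1/2 < c" unfolding c_def by (rule kh_scale_gt) (use assms in auto)
  obtain ps where majorant: "\<And>\<psi>. kh_integral \<Phi> c xs \<psi> 0 (\<lambda>_. 0) 1 \<le> ennreal (exp_affine ps \<psi>)"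
    and bound: "exp_affine_bound (kh_variance c 0) ps \<le> real (length xs) * exp (- (c - 1/2))"
    using kh_integral_bad_majorant[OF assms(1) c, of 0 \<Phi>] by auto
  have "(\<integral>\<^sup>+\<omega>. (if kh_good_run \<Phi> \<delta> xs (snd \<omega>) then 0 else 1) \<partial>kh \<Phi> \<delta> xs)
      = kh_integral \<Phi> c xs 0 0 (\<lambda>_. 0) 1"
    by (simp add: kh_integral_def kh_eq_kh_loop kh_good_run_def c_def)
  also have "\<dots> \<le> ennreal (exp_affine ps 0)" by (rule majorant)
  also have "\<dots> \<le> ennreal (real (length xs) * exp (- (c - 1/2)))"
    using exp_affine_zero_le_bound[OF kh_variance_nonneg[OF c]] bound by (intro ennreal_leI) (rule order_trans)
  also have "exp (- (c - 1/2)) = \<delta> / (2 * real (length xs))"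
    unfolding c_def by (rule exp_kh_scale) (use assms in auto)
  also have "real (length xs) * (\<delta> / (2 * real (length xs))) = \<delta> / 2"
    using assms by simp
  finally show ?thesis .
qed

section \<open>Repeated kernel halving\<close>

fun rkh_good :: "('a \<Rightarrow> 'h::real_inner) \<Rightarrow> real \<Rightarrow> nat \<Rightarrow> 'a list \<Rightarrow> bool list list \<Rightarrow> bool" where
  "rkh_good \<Phi> \<delta> 0 xs ess = True"
| "rkh_good \<Phi> \<delta> (Suc j) xs ess = (case ess of [] \<Rightarrow> False
     | es # ess' \<Rightarrow> kh_good_run \<Phi> \<delta> xs es \<and> rkh_good \<Phi> \<delta> j (kh_select xs es) ess')"

lemma nn_integral_rkh_iter_Suc:
  "(\<integral>\<^sup>+\<omega>. F \<omega> \<partial>rkh_iter \<Phi> \<delta> (Suc j) xs) =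
   (\<integral>\<^sup>+\<omega>. (\<integral>\<^sup>+\<omega>'. F (fst \<omega>', snd \<omega> # snd \<omega>') \<partial>rkh_iter \<Phi> \<delta> j (fst \<omega>)) \<partial>kh \<Phi> \<delta> xs)"
  unfolding rkh_iter.simps nn_integral_bind_pmf
proof (intro nn_integral_cong)
  fix \<omega> :: "'a list \<times> bool list"
  show "(\<integral>\<^sup>+\<omega>'. F \<omega>' \<partial>(case \<omega> of (S, es) \<Rightarrow> map_pmf (\<lambda>(T, ess). (T, es # ess)) (rkh_iter \<Phi> \<delta> j S)))
      = (\<integral>\<^sup>+\<omega>'. F (fst \<omega>', snd \<omega> # snd \<omega>') \<partial>rkh_iter \<Phi> \<delta> j (fst \<omega>))"
    by (cases \<omega>) (simp add: split_beta)
qed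

definition rkh_good_mgf :: "('a \<Rightarrow> 'h::real_inner) \<Rightarrow> real \<Rightarrow> nat \<Rightarrow> 'a list \<Rightarrow> 'h \<Rightarrow> ennreal" where
  "rkh_good_mgf \<Phi> \<delta> j xs g = (\<integral>\<^sup>+\<omega>. (if rkh_good \<Phi> \<delta> j xs (snd \<omega>)
      then ennreal (exp (inner g (emb \<Phi> xs - emb \<Phi> (fst \<omega>)))) else 0) \<partial>rkh_iter \<Phi> \<delta> j xs)"

lemma rkh_good_mgf_Suc:
  "rkh_good_mgf \<Phi> \<delta> (Suc j) xs g = (\<integral>\<^sup>+\<omega>. (if kh_good_run \<Phi> \<delta> xs (snd \<omega>)
      then ennreal (exp (inner g (emb \<Phi> xs - emb \<Phi> (fst \<omega>)))) * rkh_good_mgf \<Phi> \<delta> j (fst \<omega>) g else 0)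
    \<partial>kh \<Phi> \<delta> xs)"
proof -
  have "rkh_good_mgf \<Phi> \<delta> (Suc j) xs g = (\<integral>\<^sup>+\<omega>. (\<integral>\<^sup>+\<omega>'. (if rkh_good \<Phi> \<delta> (Suc j) xs (snd \<omega> # snd \<omega>')
      then ennreal (exp (inner g (emb \<Phi> xs - emb \<Phi> (fst \<omega>')))) else 0) \<partial>rkh_iter \<Phi> \<delta> j (fst \<omega>)) \<partial>kh \<Phi> \<delta> xs)"
    unfolding rkh_good_mgf_def by (simp only: nn_integral_rkh_iter_Suc fst_conv snd_conv)
  also have "\<dots> = (\<integral>\<^sup>+\<omega>. (if kh_good_run \<Phi> \<delta> xs (snd \<omega>)
      then ennreal (exp (inner g (emb \<Phi> xs - emb \<Phi> (fst \<omega>)))) * rkh_good_mgf \<Phi> \<delta> j (fst \<omega>) g else 0)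
    \<partial>kh \<Phi> \<delta> xs)"
  proof (intro nn_integral_cong_AE AE_pmfI)
    fix \<omega> assume "\<omega> \<in> set_pmf (kh \<Phi> \<delta> xs)"
    from kh_support(1)[OF this] have S: "kh_select xs (snd \<omega>) = fst \<omega>" by simp
    define E where "E = exp (inner g (emb \<Phi> xs - emb \<Phi> (fst \<omega>)))"
    define good where "good = kh_good_run \<Phi> \<delta> xs (snd \<omega>)"
    have split: "(if rkh_good \<Phi> \<delta> (Suc j) xs (snd \<omega> # es)
        then ennreal (exp (inner g (emb \<Phi> xs - emb \<Phi> T))) else 0)
      = (if good then ennreal E else 0) * (if rkh_good \<Phi> \<delta> j (fst \<omega>) es
        then ennreal (exp (inner g (emb \<Phi> (fst \<omega>) - emb \<Phi> T))) else 0)" for T es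
    proof -
      have "exp (inner g (emb \<Phi> xs - emb \<Phi> T)) = E * exp (inner g (emb \<Phi> (fst \<omega>) - emb \<Phi> T))"
        by (simp add: E_def inner_diff_right flip: exp_add)
      moreover have "0 \<le> E" by (simp add: E_def)
      ultimately show ?thesis by (simp add: S good_def ennreal_mult)
    qed
    have "(\<integral>\<^sup>+\<omega>'. (if rkh_good \<Phi> \<delta> (Suc j) xs (snd \<omega> # snd \<omega>')
        then ennreal (exp (inner g (emb \<Phi> xs - emb \<Phi> (fst \<omega>')))) else 0) \<partial>rkh_iter \<Phi> \<delta> j (fst \<omega>))
      = (if good then ennreal E else 0) * rkh_good_mgf \<Phi> \<delta> j (fst \<omega>) g"
      unfolding split rkh_good_mgf_def by (rule nn_integral_cmult) simp
    then show "(\<integral>\<^sup>+\<omega>'. (if rkh_good \<Phi> \<delta> (Suc j) xs (snd \<omega> # snd \<omega>')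
        then ennreal (exp (inner g (emb \<Phi> xs - emb \<Phi> (fst \<omega>')))) else 0) \<partial>rkh_iter \<Phi> \<delta> j (fst \<omega>))
      = (if kh_good_run \<Phi> \<delta> xs (snd \<omega>)
         then ennreal (exp (inner g (emb \<Phi> xs - emb \<Phi> (fst \<omega>)))) * rkh_good_mgf \<Phi> \<delta> j (fst \<omega>) g else 0)"
      by (simp add: E_def good_def)
  qed
  finally show ?thesis .
qed

text \<open>The variance proxy contributed by the halving round whose input has \<open>n * 2 ^ (i + 1)\<close> points, i.e.
  by the \<open>i\<close>-th round counted backwards from the output of size \<open>n\<close>.\<close>

definition rkh_variance :: "real \<Rightarrow> real \<Rightarrow> nat \<Rightarrow> nat \<Rightarrow> real" where
  "rkh_variance B \<delta> n i = kh_variance (kh_scale \<delta> (n * 2 ^ Suc i)) B / (4 * (real (n * 2 ^ i))\<^sup>2)"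

lemma rkh_good_mgf_le:
  fixes \<Phi> :: "'a \<Rightarrow> 'h::real_inner" and g :: 'h
  assumes "length xs = n * 2 ^ j" "0 < n" "0 < \<delta>" "\<delta> \<le> 1"
    and "\<forall>x\<in>set xs. \<forall>y\<in>set xs. norm (\<Phi> x - \<Phi> y) \<le> B"
  shows "rkh_good_mgf \<Phi> \<delta> j xs g \<le> ennreal (exp ((\<Sum>i<j. rkh_variance B \<delta> n i) * (norm g)\<^sup>2 / 2))"
  using assms
proof (induction j arbitrary: xs)
  case 0
  then show ?case by (simp add: rkh_good_mgf_def)
next
  case (Suc j)
  define K where "K = exp ((\<Sum>i<j. rkh_variance B \<delta> n i) * (norm g)\<^sup>2 / 2)"
  define M where "M \<omega> = (if kh_good_run \<Phi> \<delta> xs (snd \<omega>)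
    then ennreal (exp (inner g (emb \<Phi> xs - emb \<Phi> (fst \<omega>)))) else 0)" for \<omega> :: "'a list \<times> bool list"
  have len: "length xs = 2 * (n * 2 ^ j)" using Suc.prems by simp
  have "rkh_good_mgf \<Phi> \<delta> (Suc j) xs g \<le> (\<integral>\<^sup>+\<omega>. M \<omega> * ennreal K \<partial>kh \<Phi> \<delta> xs)"
    unfolding rkh_good_mgf_Suc
  proof (intro nn_integral_mono_AE AE_pmfI)
    fix \<omega> assume \<omega>: "\<omega> \<in> set_pmf (kh \<Phi> \<delta> xs)"
    have "length (fst \<omega>) = n * 2 ^ j" "set (fst \<omega>) \<subseteq> set xs"
      using kh_support(2,3)[OF \<omega>] len by auto
    then have "rkh_good_mgf \<Phi> \<delta> j (fst \<omega>) g \<le> ennreal K"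
      unfolding K_def using Suc.prems by (intro Suc.IH) auto
    then show "(if kh_good_run \<Phi> \<delta> xs (snd \<omega>)
        then ennreal (exp (inner g (emb \<Phi> xs - emb \<Phi> (fst \<omega>)))) * rkh_good_mgf \<Phi> \<delta> j (fst \<omega>) g else 0)
      \<le> M \<omega> * ennreal K"
      by (simp add: M_def mult_left_mono)
  qed
  also have "\<dots> = (\<integral>\<^sup>+\<omega>. M \<omega> \<partial>kh \<Phi> \<delta> xs) * ennreal K" by (rule nn_integral_multc) simp
  also have "\<dots> \<le> ennreal (exp (rkh_variance B \<delta> n j * (norm g)\<^sup>2 / 2)) * ennreal K"
    using kh_good_run_mgf_le[OF len _ Suc.prems(3-5), of g] Suc.prems(2)
    by (intro mult_right_mono) (simp_all add: M_def rkh_variance_def Suc.prems(1))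
  also have "\<dots> = ennreal (exp (rkh_variance B \<delta> n j * (norm g)\<^sup>2 / 2
      + (\<Sum>i<j. rkh_variance B \<delta> n i) * (norm g)\<^sup>2 / 2))"
    by (simp add: K_def ennreal_mult exp_add)
  also have "rkh_variance B \<delta> n j * (norm g)\<^sup>2 / 2 + (\<Sum>i<j. rkh_variance B \<delta> n i) * (norm g)\<^sup>2 / 2
      = (\<Sum>i<Suc j. rkh_variance B \<delta> n i) * (norm g)\<^sup>2 / 2"
    by (simp add: algebra_simps)
  finally show ?case .
qed

lemma rkh_bad_le:
  assumes "length xs = n * 2 ^ j" "0 < n" "0 < \<delta>" "\<delta> \<le> 1"
  shows "(\<integral>\<^sup>+\<omega>. (if rkh_good \<Phi> \<delta> j xs (snd \<omega>) then 0 else 1) \<partial>rkh_iter \<Phi> \<delta> j xs) \<le> ennreal (real j * \<delta> / 2)"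
  using assms
proof (induction j arbitrary: xs)
  case 0
  then show ?case by simp
next
  case (Suc j)
  define M where "M \<omega> = (if kh_good_run \<Phi> \<delta> xs (snd \<omega>) then 0 else 1 :: ennreal)"
    for \<omega> :: "'a list \<times> bool list"
  have len: "length xs = 2 * (n * 2 ^ j)" using Suc.prems by simp
  have "(\<integral>\<^sup>+\<omega>. (if rkh_good \<Phi> \<delta> (Suc j) xs (snd \<omega>) then 0 else 1) \<partial>rkh_iter \<Phi> \<delta> (Suc j) xs)
      = (\<integral>\<^sup>+\<omega>. (\<integral>\<^sup>+\<omega>'. (if rkh_good \<Phi> \<delta> (Suc j) xs (snd \<omega> # snd \<omega>') then 0 else 1)
          \<partial>rkh_iter \<Phi> \<delta> j (fst \<omega>)) \<partial>kh \<Phi> \<delta> xs)"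
    by (simp only: nn_integral_rkh_iter_Suc snd_conv)
  also have "\<dots> \<le> (\<integral>\<^sup>+\<omega>. M \<omega> + ennreal (real j * \<delta> / 2) \<partial>kh \<Phi> \<delta> xs)"
  proof (intro nn_integral_mono_AE AE_pmfI)
    fix \<omega> assume \<omega>: "\<omega> \<in> set_pmf (kh \<Phi> \<delta> xs)"
    have S: "kh_select xs (snd \<omega>) = fst \<omega>" "length (fst \<omega>) = n * 2 ^ j"
      using kh_support(1,2)[OF \<omega>] len by auto
    have "(\<integral>\<^sup>+\<omega>'. (if rkh_good \<Phi> \<delta> (Suc j) xs (snd \<omega> # snd \<omega>') then 0 else 1) \<partial>rkh_iter \<Phi> \<delta> j (fst \<omega>))
        \<le> (\<integral>\<^sup>+\<omega>'. M \<omega> + (if rkh_good \<Phi> \<delta> j (fst \<omega>) (snd \<omega>') then 0 else 1) \<partial>rkh_iter \<Phi> \<delta> j (fst \<omega>))"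
      by (intro nn_integral_mono) (auto simp: S M_def)
    also have "\<dots> = M \<omega> + (\<integral>\<^sup>+\<omega>'. (if rkh_good \<Phi> \<delta> j (fst \<omega>) (snd \<omega>') then 0 else 1) \<partial>rkh_iter \<Phi> \<delta> j (fst \<omega>))"
      by (subst nn_integral_add) simp_all
    also have "\<dots> \<le> M \<omega> + ennreal (real j * \<delta> / 2)"
      using Suc.IH[of "fst \<omega>"] S Suc.prems by (intro add_left_mono) auto
    finally show "(\<integral>\<^sup>+\<omega>'. (if rkh_good \<Phi> \<delta> (Suc j) xs (snd \<omega> # snd \<omega>') then 0 else 1) \<partial>rkh_iter \<Phi> \<delta> j (fst \<omega>))
        \<le> M \<omega> + ennreal (real j * \<delta> / 2)" .
  qed
  also have "\<dots> = (\<integral>\<^sup>+\<omega>. M \<omega> \<partial>kh \<Phi> \<delta> xs) + ennreal (real j * \<delta> / 2)"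
    by (subst nn_integral_add) simp_all
  also have "\<dots> \<le> ennreal (\<delta> / 2) + ennreal (real j * \<delta> / 2)"
    using kh_bad_run_le[of xs \<delta> \<Phi>] len Suc.prems unfolding M_def by (intro add_right_mono) auto
  also have "\<dots> = ennreal (\<delta> / 2 + real j * \<delta> / 2)"
    using Suc.prems by (simp add: ennreal_plus)
  also have "\<delta> / 2 + real j * \<delta> / 2 = real (Suc j) * \<delta> / 2"
    by (simp add: field_simps)
  finally show ?case .
qed

lemma sub_gaussian_onI:
  fixes P :: "'w pmf" and \<phi> :: "'w \<Rightarrow> 'h::real_inner"
  assumes "\<And>f. (\<integral>\<^sup>+\<omega>. (if \<omega> \<in> E then ennreal (exp (inner f (\<phi> \<omega>))) else 0) \<partial>P)
      \<le> ennreal (exp (\<nu>\<^sup>2 / 2 * (norm f)\<^sup>2))"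
  shows "sub_gaussian_on P \<phi> \<nu> E"
  unfolding sub_gaussian_on_def
proof
  fix f :: 'h
  have "measure_pmf.expectation P (\<lambda>\<omega>. exp (inner f (\<phi> \<omega>)) * indicator E \<omega>)
      = enn2real (\<integral>\<^sup>+\<omega>. ennreal (exp (inner f (\<phi> \<omega>)) * indicator E \<omega>) \<partial>P)"
    by (rule integral_eq_nn_integral) auto
  also have "(\<integral>\<^sup>+\<omega>. ennreal (exp (inner f (\<phi> \<omega>)) * indicator E \<omega>) \<partial>P)
      = (\<integral>\<^sup>+\<omega>. (if \<omega> \<in> E then ennreal (exp (inner f (\<phi> \<omega>))) else 0) \<partial>P)"
    by (intro nn_integral_cong) (simp add: indicator_def)
  also have "enn2real \<dots> \<le> exp (\<nu>\<^sup>2 / 2 * (norm f)\<^sup>2)"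
    by (intro enn2real_leI assms) simp
  finally show "measure_pmf.expectation P (\<lambda>\<omega>. exp (inner f (\<phi> \<omega>)) * indicator E \<omega>)
      \<le> exp (\<nu>\<^sup>2 / 2 * (norm f)\<^sup>2)" .
qed

lemma rkh_iter_sub_gaussian_on:
  fixes \<Phi> :: "'a \<Rightarrow> 'h::real_inner"
  assumes "length xs = n * 2 ^ j" "0 < n" "0 < \<delta>" "\<delta> \<le> 1"
    and "\<forall>x\<in>set xs. \<forall>y\<in>set xs. norm (\<Phi> x - \<Phi> y) \<le> B"
    and "(\<Sum>i<j. rkh_variance B \<delta> n i) \<le> \<nu>\<^sup>2"
  shows "sub_gaussian_on (rkh_iter \<Phi> \<delta> j xs) (\<lambda>\<omega>. emb \<Phi> xs - emb \<Phi> (fst \<omega>)) \<nu>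
    {\<omega>. rkh_good \<Phi> \<delta> j xs (snd \<omega>)}"
proof (rule sub_gaussian_onI)
  fix f :: 'h
  have "(\<Sum>i<j. rkh_variance B \<delta> n i) * (norm f)\<^sup>2 \<le> \<nu>\<^sup>2 * (norm f)\<^sup>2"
    using assms(6) by (rule mult_right_mono) simp
  then have "exp ((\<Sum>i<j. rkh_variance B \<delta> n i) * (norm f)\<^sup>2 / 2) \<le> exp (\<nu>\<^sup>2 / 2 * (norm f)\<^sup>2)"
    by simp
  then have "ennreal (exp ((\<Sum>i<j. rkh_variance B \<delta> n i) * (norm f)\<^sup>2 / 2))
      \<le> ennreal (exp (\<nu>\<^sup>2 / 2 * (norm f)\<^sup>2))"
    by (rule ennreal_leI)
  with rkh_good_mgf_le[OF assms(1-5), of f]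
  show "(\<integral>\<^sup>+\<omega>. (if \<omega> \<in> {\<omega>. rkh_good \<Phi> \<delta> j xs (snd \<omega>)}
      then ennreal (exp (inner f (emb \<Phi> xs - emb \<Phi> (fst \<omega>)))) else 0) \<partial>rkh_iter \<Phi> \<delta> j xs)
    \<le> ennreal (exp (\<nu>\<^sup>2 / 2 * (norm f)\<^sup>2))"
    unfolding rkh_good_mgf_def mem_Collect_eq by (rule order_trans)
qed

lemma rkh_iter_good_prob:
  assumes "length xs = n * 2 ^ j" "0 < n" "0 < \<delta>" "\<delta> \<le> 1"
  shows "1 - real j * \<delta> / 2 \<le> measure_pmf.prob (rkh_iter \<Phi> \<delta> j xs) {\<omega>. rkh_good \<Phi> \<delta> j xs (snd \<omega>)}"
proof -
  let ?P = "rkh_iter \<Phi> \<delta> j xs" and ?E = "{\<omega>. rkh_good \<Phi> \<delta> j xs (snd \<omega>)}"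
  have "emeasure ?P (UNIV - ?E) = (\<integral>\<^sup>+\<omega>. indicator (UNIV - ?E) \<omega> \<partial>?P)"
    by (rule nn_integral_indicator[symmetric]) simp
  also have "\<dots> = (\<integral>\<^sup>+\<omega>. (if rkh_good \<Phi> \<delta> j xs (snd \<omega>) then 0 else 1) \<partial>?P)"
    by (intro nn_integral_cong) (simp add: indicator_def)
  also have "\<dots> \<le> ennreal (real j * \<delta> / 2)" by (rule rkh_bad_le[OF assms])
  finally have "measure_pmf.prob ?P (UNIV - ?E) \<le> real j * \<delta> / 2"
    using assms by (simp add: measure_pmf.emeasure_eq_measure ennreal_le_iff)
  then show ?thesis using measure_pmf.prob_compl[of ?E ?P] by simp
qed

section \<open>The accumulated variance proxy\<close>

lemma sum_linear_div_four_pow: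
  fixes \<alpha> :: real
  shows "(\<Sum>i<m. (\<alpha> + real i / 2) / 4 ^ i) = 4/3 * \<alpha> + 2/9 - (4/3 * \<alpha> + 2/9 * (3 * real m + 1)) / 4 ^ m"
proof (induction m)
  case (Suc m)
  show ?case unfolding sum.lessThan_Suc Suc.IH by (simp add: field_simps)
qed simp

lemma sum_linear_div_four_pow_le:
  fixes \<alpha> :: real
  assumes "0 \<le> \<alpha>"
  shows "(\<Sum>i<m. (\<alpha> + real i / 2) / 4 ^ i) \<le> 4/3 * \<alpha> + 2/9"
  using assms unfolding sum_linear_div_four_pow by simp

lemma kh_variance_div_le:
  fixes l L0 K N :: real
  assumes "1 \<le> l" "l \<le> L0 + real i" "0 \<le> K" "0 < N"
  shows "kh_variance (1/2 + l) (2 * K) / (4 * (N * 2 ^ i)\<^sup>2) \<le> K\<^sup>2 / N\<^sup>2 * ((L0 / 2 + 5/8 + real i / 2) / 4 ^ i)"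
proof -
  have "(1/2 + l)\<^sup>2 \<le> 2 * l * (l / 2 + 5/8)"
    using assms(1) by (simp add: power2_eq_square algebra_simps)
  then have "(1/2 + l)\<^sup>2 / (2 * l) \<le> l / 2 + 5/8"
    using assms(1) by (simp add: divide_le_eq mult.commute)
  then have q: "(1/2 + l)\<^sup>2 / (2 * l) \<le> L0 / 2 + 5/8 + real i / 2"
    using assms(2) by linarith
  have sg: "kh_variance (1/2 + l) (2 * K) = 4 * K\<^sup>2 * ((1/2 + l)\<^sup>2 / (2 * l))"
    by (simp add: kh_variance_def power_mult_distrib)
  have "(4::real) ^ i = 2 ^ i * 2 ^ i" by (simp flip: power_mult_distrib)
  then have pw: "(N * 2 ^ i)\<^sup>2 = N\<^sup>2 * 4 ^ i"
    by (simp add: power2_eq_square algebra_simps)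
  have "kh_variance (1/2 + l) (2 * K) / (4 * (N * 2 ^ i)\<^sup>2)
      = K\<^sup>2 / N\<^sup>2 * (((1/2 + l)\<^sup>2 / (2 * l)) / 4 ^ i)"
    unfolding sg pw using assms(4) by (simp add: field_simps)
  also have "\<dots> \<le> K\<^sup>2 / N\<^sup>2 * ((L0 / 2 + 5/8 + real i / 2) / 4 ^ i)"
    by (intro mult_left_mono divide_right_mono q) simp_all
  finally show ?thesis .
qed

lemma rkh_variance_le:
  fixes n m :: nat and \<delta> K :: real
  assumes "0 < n" "0 < m" "0 < \<delta>" "0 \<le> K" "1 \<le> ln (4 * real n * real m / \<delta>)"
  shows "rkh_variance (2 * K) (\<delta> / real m) n i
    \<le> K\<^sup>2 / (real n)\<^sup>2 * ((ln (4 * real n * real m / \<delta>) / 2 + 5/8 + real i / 2) / 4 ^ i)"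
proof -
  define x0 where "x0 = 4 * real n * real m / \<delta>"
  have "0 < x0" using assms(1-3) by (simp add: x0_def)
  have "2 * real (n * 2 ^ Suc i) / (\<delta> / real m) = x0 * 2 ^ i"
    using assms(3) by (simp add: x0_def field_simps)
  then have "kh_scale (\<delta> / real m) (n * 2 ^ Suc i) = 1/2 + (ln x0 + real i * ln 2)"
    using \<open>0 < x0\<close> by (simp add: kh_scale_def ln_mult ln_realpow)
  then have "rkh_variance (2 * K) (\<delta> / real m) n i
      = kh_variance (1/2 + (ln x0 + real i * ln 2)) (2 * K) / (4 * (real n * 2 ^ i)\<^sup>2)"
    by (simp add: rkh_variance_def)
  also have "\<dots> \<le> K\<^sup>2 / (real n)\<^sup>2 * ((ln x0 / 2 + 5/8 + real i / 2) / 4 ^ i)"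
  proof (rule kh_variance_div_le)
    have "0 \<le> ln (2::real)" "ln (2::real) \<le> 1" using ln_2_less_1 by simp_all
    then show "1 \<le> ln x0 + real i * ln 2" "ln x0 + real i * ln 2 \<le> ln x0 + real i"
      using assms(5) mult_left_mono[of "ln 2" 1 "real i"] by (simp_all add: x0_def add_increasing2)
  qed (use assms in simp_all)
  finally show ?thesis by (simp only: x0_def)
qed

lemma rkh_variance_sum_le:
  fixes n m :: nat and \<delta> K :: real
  assumes "0 < n" "0 < m" "0 < \<delta>" "\<delta> < 1" "0 \<le> K"
  shows "(\<Sum>i<m. rkh_variance (2 * K) (\<delta> / real m) n i)
     \<le> (2 / (real n * sqrt 3) * sqrt (ln (6 * real n * real m / \<delta>)) * K)\<^sup>2"
proof -
  define x0 where "x0 = 4 * real n * real m / \<delta>"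
  define L0 where "L0 = ln x0"
  define Lm where "Lm = ln (6 * real n * real m / \<delta>)"
  have "1 * 1 \<le> real n * real m" using assms by (intro mult_mono) auto
  then have "4 \<le> x0" using assms by (simp add: x0_def le_divide_eq)
  then have "0 < x0" "exp 1 \<le> x0" using exp_le by auto
  then have "1 \<le> L0" by (simp add: L0_def ln_ge_iff)
  have "ln (2/3) \<le> 2/3 - (1::real)" by (rule ln_le_minus_one) simp
  then have "1/3 \<le> ln (3/2::real)" by (simp add: ln_div)
  moreover have "6 * real n * real m / \<delta> = 3/2 * x0"
    by (simp add: x0_def algebra_simps)
  then have "Lm = ln (3/2) + L0"
    unfolding Lm_def L0_def by (simp only:) (rule ln_mult_pos; use \<open>0 < x0\<close> in simp)
  ultimately have "0 \<le> Lm" and main: "4/3 * (L0 / 2 + 5/8) + 2/9 \<le> 4/3 * Lm"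
    using \<open>1 \<le> L0\<close> by (simp_all add: algebra_simps)
  have "(\<Sum>i<m. rkh_variance (2 * K) (\<delta> / real m) n i)
      \<le> (\<Sum>i<m. K\<^sup>2 / (real n)\<^sup>2 * ((L0 / 2 + 5/8 + real i / 2) / 4 ^ i))"
    unfolding L0_def x0_def using assms \<open>1 \<le> L0\<close>
    by (intro sum_mono rkh_variance_le) (simp_all add: L0_def x0_def)
  also have "\<dots> = K\<^sup>2 / (real n)\<^sup>2 * (\<Sum>i<m. (L0 / 2 + 5/8 + real i / 2) / 4 ^ i)"
    by (simp add: sum_distrib_left)
  also have "\<dots> \<le> K\<^sup>2 / (real n)\<^sup>2 * (4/3 * Lm)"
  proof (rule mult_left_mono)
    have "(\<Sum>i<m. (L0 / 2 + 5/8 + real i / 2) / 4 ^ i) \<le> 4/3 * (L0 / 2 + 5/8) + 2/9"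
      by (rule sum_linear_div_four_pow_le) (use \<open>1 \<le> L0\<close> in simp)
    then show "(\<Sum>i<m. (L0 / 2 + 5/8 + real i / 2) / 4 ^ i) \<le> 4/3 * Lm"
      using main by (rule order_trans)
  qed simp
  also have "\<dots> = (2 / (real n * sqrt 3) * sqrt Lm * K)\<^sup>2"
    using \<open>0 \<le> Lm\<close> by (simp add: power_mult_distrib power_divide)
  finally show ?thesis by (simp only: Lm_def)
qed

section \<open>Distances between feature vectors\<close>

lemma emp_avg_inner_eq_inner_emb:
  fixes \<Phi> :: "'a \<Rightarrow> 'h::real_inner"
  shows "emp_avg xs (\<lambda>y. inner f (\<Phi> y)) = inner f (emb \<Phi> xs)"
proof -
  have "inner f (sum_list (map \<Phi> xs)) = (\<Sum>y\<leftarrow>xs. inner f (\<Phi> y))"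
    by (induction xs) (simp_all add: inner_add_right)
  then show ?thesis by (simp add: emp_avg_def emb_def divide_inverse mult.commute)
qed

lemma norm_diff_emb_le_mmd:
  fixes \<Phi> :: "'a \<Rightarrow> 'h::real_inner"
  shows "norm (\<Phi> x - emb \<Phi> xs) \<le> mmd \<Phi> [x] xs"
proof -
  define v where "v = \<Phi> x - emb \<Phi> xs"
  define h where "h f = \<bar>emp_avg [x] (\<lambda>x. inner f (\<Phi> x)) - emp_avg xs (\<lambda>x. inner f (\<Phi> x))\<bar>" for f
  have h: "h f = \<bar>inner f v\<bar>" for f
    by (simp add: h_def emp_avg_inner_eq_inner_emb v_def inner_diff_right emb_def)
  have "bdd_above (h ` {f. norm f \<le> 1})"
  proof (rule bdd_aboveI2)
    fix f :: 'h assume "f \<in> {f. norm f \<le> 1}"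
    then have "norm f * norm v \<le> 1 * norm v" by (intro mult_right_mono) auto
    then show "h f \<le> norm v" unfolding h using Cauchy_Schwarz_ineq2[of f v] by simp
  qed
  moreover have "h (sgn v) = norm v"
  proof (cases "v = 0")
    case False
    have "inner (sgn v) v = inner v v / norm v"
      by (simp add: sgn_div_norm inner_scaleR_left divide_inverse)
    also have "\<dots> = norm v"
      using False by (simp add: power2_norm_eq_inner[symmetric] power2_eq_square)
    finally show ?thesis by (simp add: h)
  qed (simp add: h)
  moreover have "sgn v \<in> {f. norm f \<le> 1}" by (simp add: norm_sgn)
  ultimately have "norm v \<le> (SUP f\<in>{f. norm f \<le> 1}. h f)"
    using cSUP_upper[of "sgn v" "{f. norm f \<le> 1}" h] by simp
  then show ?thesis unfolding mmd_def h_def[abs_def] v_def .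
qed

lemma feature_dist_le:
  fixes \<Phi> :: "'a \<Rightarrow> 'h::real_inner"
  assumes "x \<in> set xs" "y \<in> set xs"
  shows "norm (\<Phi> x - \<Phi> y) \<le> 2 * min (Max ((\<lambda>x. sqrt (fkernel \<Phi> x x)) ` set xs))
    (Max ((\<lambda>x. mmd \<Phi> [x] xs) ` set xs))"
proof -
  have feature: "norm (\<Phi> z) \<le> Max ((\<lambda>x. sqrt (fkernel \<Phi> x x)) ` set xs)" if "z \<in> set xs" for z
  proof -
    have "norm (\<Phi> z) = sqrt (fkernel \<Phi> z z)"
      unfolding fkernel_def by (rule norm_eq_sqrt_inner)
    also have "\<dots> \<le> Max ((\<lambda>x. sqrt (fkernel \<Phi> x x)) ` set xs)"
      using that by (intro Max_ge) auto
    finally show ?thesis .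
  qed
  have centred: "norm (\<Phi> z - emb \<Phi> xs) \<le> Max ((\<lambda>x. mmd \<Phi> [x] xs) ` set xs)" if "z \<in> set xs" for z
  proof -
    have "mmd \<Phi> [z] xs \<le> Max ((\<lambda>x. mmd \<Phi> [x] xs) ` set xs)"
      using that by (intro Max_ge) auto
    with norm_diff_emb_le_mmd show ?thesis by (rule order_trans)
  qed
  have "norm (\<Phi> x - \<Phi> y) \<le> norm (\<Phi> x) + norm (\<Phi> y)"
    by (rule norm_triangle_ineq4)
  with feature[OF assms(1)] feature[OF assms(2)]
  have "norm (\<Phi> x - \<Phi> y) \<le> 2 * Max ((\<lambda>x. sqrt (fkernel \<Phi> x x)) ` set xs)" by linarith
  moreover have "norm (\<Phi> x - \<Phi> y) \<le> norm (\<Phi> x - emb \<Phi> xs) + norm (\<Phi> y - emb \<Phi> xs)"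
    using norm_triangle_ineq4[of "\<Phi> x - emb \<Phi> xs" "\<Phi> y - emb \<Phi> xs"] by simp
  with centred[OF assms(1)] centred[OF assms(2)]
  have "norm (\<Phi> x - \<Phi> y) \<le> 2 * Max ((\<lambda>x. mmd \<Phi> [x] xs) ` set xs)" by linarith
  ultimately show ?thesis by (simp add: min_def)
qed

theorem propositionB4:
  fixes \<Phi> :: "'a \<Rightarrow> 'h::real_inner" and \<delta> :: real and xs :: "'a list" and n_out m :: nat
  assumes "0 < \<delta>" "\<delta> < 1" "0 < n_out" "0 < m" "length xs = n_out * 2 ^ m"
  shows "\<exists>E. measure_pmf.prob (rkh \<Phi> \<delta> m xs) E \<ge> 1 - \<delta> / 2 \<and>
    sub_gaussian_on (rkh \<Phi> \<delta> m xs) (\<lambda>\<omega>. emb \<Phi> xs - emb \<Phi> (fst \<omega>))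
      (2 / (real n_out * sqrt 3)
        * sqrt (ln (6 * real n_out * log 2 (real (length xs) / real n_out) / \<delta>))
        * min (Max ((\<lambda>x. sqrt (fkernel \<Phi> x x)) ` set xs))
              (Max ((\<lambda>x. mmd \<Phi> [x] xs) ` set xs)))
      E"
proof -
  define K where "K = min (Max ((\<lambda>x. sqrt (fkernel \<Phi> x x)) ` set xs)) (Max ((\<lambda>x. mmd \<Phi> [x] xs) ` set xs))"
  define E where "E = {\<omega> :: 'a list \<times> bool list list. rkh_good \<Phi> (\<delta> / real m) m xs (snd \<omega>)}"
  have rkh: "rkh \<Phi> \<delta> m xs = rkh_iter \<Phi> (\<delta> / real m) m xs" by (simp add: rkh_def)
  have log: "log 2 (real (length xs) / real n_out) = real m" using assms(3,5) by simp
  have "\<delta> \<le> 1 * real m" using assms(2,4) by simp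
  then have \<delta>m: "0 < \<delta> / real m" "\<delta> / real m \<le> 1" using assms(1,4) by (simp_all add: divide_le_eq)
  have dist: "\<forall>x\<in>set xs. \<forall>y\<in>set xs. norm (\<Phi> x - \<Phi> y) \<le> 2 * K"
  proof (intro ballI)
    fix x y assume "x \<in> set xs" "y \<in> set xs"
    then show "norm (\<Phi> x - \<Phi> y) \<le> 2 * K" unfolding K_def by (rule feature_dist_le)
  qed
  have "length xs \<noteq> 0" using assms(3,5) by simp
  then have "hd xs \<in> set xs" by simp
  with dist have "norm (\<Phi> (hd xs) - \<Phi> (hd xs)) \<le> 2 * K" by blast
  then have "0 \<le> K" by simp
  have variance: "(\<Sum>i<m. rkh_variance (2 * K) (\<delta> / real m) n_out i)
      \<le> (2 / (real n_out * sqrt 3) * sqrt (ln (6 * real n_out * real m / \<delta>)) * K)\<^sup>2"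
    using assms(1-4) \<open>0 \<le> K\<close> by (intro rkh_variance_sum_le)
  have prob: "1 - real m * (\<delta> / real m) / 2 \<le> measure_pmf.prob (rkh \<Phi> \<delta> m xs) E"
    unfolding rkh E_def by (rule rkh_iter_good_prob[OF assms(5,3) \<delta>m])
  have "real m * (\<delta> / real m) = \<delta>" using assms(4) by simp
  show ?thesis
  proof (intro exI[of _ E] conjI)
    show "1 - \<delta> / 2 \<le> measure_pmf.prob (rkh \<Phi> \<delta> m xs) E"
      using prob unfolding \<open>real m * (\<delta> / real m) = \<delta>\<close> .
    show "sub_gaussian_on (rkh \<Phi> \<delta> m xs) (\<lambda>\<omega>. emb \<Phi> xs - emb \<Phi> (fst \<omega>))
      (2 / (real n_out * sqrt 3) * sqrt (ln (6 * real n_out * log 2 (real (length xs) / real n_out) / \<delta>))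
        * min (Max ((\<lambda>x. sqrt (fkernel \<Phi> x x)) ` set xs)) (Max ((\<lambda>x. mmd \<Phi> [x] xs) ` set xs))) E"
      unfolding rkh log K_def[symmetric] E_def
      by (rule rkh_iter_sub_gaussian_on[OF assms(5,3) \<delta>m dist variance])
  qed
qed

end
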